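(* There is an absolute constant $C$ such that for every $n\ge 2$ and every family $\mathcal{F}$ of $n$ axis-parallel closed rectangles in the plane with intersection graph $G$, we have $\chi_{CF}^{cn}(G)\le C\log n$.
   Context: The intersection graph of $\mathcal{F}$ has vertex set $\mathcal{F}$, with distinct $R_1,R_2$ adjacent iff $R_1\cap R_2\neq\emptyset$. $\chi_{CF}^{cn}(G)$ is the minimum number of colors in a coloring of $V(G)$ such that for every vertex $v$, the closed neighborhood $N_G[v]=\{v\}\cup\{u:\{u,v\}\in E(G)\}$ contains a vertex whose color differs from the colors of all other vertices of $N_G[v]$. *)

theory Defs
  imports Complex_Main
begin

definition is_rectangle :: "(real \<times> real) set \<Rightarrow> bool" where
  "is_rectangle R \<longleftrightarrow> (\<exists>a b c d. a \<le> b \<and> c \<le> d \<and> R = {a..b} \<times> {c..d})"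

definition inter_adj :: "'a set \<Rightarrow> 'a set \<Rightarrow> bool" where
  "inter_adj R1 R2 \<longleftrightarrow> R1 \<noteq> R2 \<and> R1 \<inter> R2 \<noteq> {}"

definition closed_nbhd :: "'v set \<Rightarrow> ('v \<Rightarrow> 'v \<Rightarrow> bool) \<Rightarrow> 'v \<Rightarrow> 'v set" where
  "closed_nbhd V E v = {v} \<union> {u \<in> V. E u v}"

definition cf_cn_coloring :: "'v set \<Rightarrow> ('v \<Rightarrow> 'v \<Rightarrow> bool) \<Rightarrow> nat \<Rightarrow> ('v \<Rightarrow> nat) \<Rightarrow> bool" where
  "cf_cn_coloring V E k f \<longleftrightarrow> f ` V \<subseteq> {..<k} \<and>
     (\<forall>v\<in>V. \<exists>u\<in>closed_nbhd V E v. \<forall>w\<in>closed_nbhd V E v. w \<noteq> u \<longrightarrow> f w \<noteq> f u)"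

definition chi_cf_cn :: "'v set \<Rightarrow> ('v \<Rightarrow> 'v \<Rightarrow> bool) \<Rightarrow> nat" where
  "chi_cf_cn V E = (LEAST k. \<exists>f. cf_cn_coloring V E k f)"

end

theory Submission
  imports Defs "HOL-Library.Discrete_Functions"
begin

text \<open>A vertical line through a median abscissa splits the rectangles into those left of it,
  those right of it, and those it stabs. The left and right parts do not meet and are coloured
  recursively from one common palette. Stabbed rectangles meet exactly when their vertical sides
  do; for such an interval family a greedy chain of intervals, coloured alternately with two
  colours and everything else blank, leaves in every neighbourhood a uniquely coloured member.
  Giving the stabbed rectangles three fresh colours, each halving of the family costs three
  colours, hence \<open>O(log n)\<close> in total.\<close>

text \<open>Colour 0 is a blank: it is never the unique colour in a neighbourhood, so colourings of
  different parts of a family can be superimposed without creating new conflicts.\<close>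
definition cf_blank_coloring :: "'v set \<Rightarrow> ('v \<Rightarrow> 'v \<Rightarrow> bool) \<Rightarrow> nat \<Rightarrow> ('v \<Rightarrow> nat) \<Rightarrow> bool" where
  "cf_blank_coloring V E k f \<longleftrightarrow> f ` V \<subseteq> {..<k} \<and>
     (\<forall>v\<in>V. \<exists>u\<in>V. E u v \<and> f u \<noteq> 0 \<and> (\<forall>w\<in>V. E w v \<longrightarrow> w \<noteq> u \<longrightarrow> f w \<noteq> f u))"

lemma cf_blank_coloring_cong:
  assumes "cf_blank_coloring V E k f" and "\<And>u v. u \<in> V \<Longrightarrow> v \<in> V \<Longrightarrow> E u v \<longleftrightarrow> E' u v"
  shows "cf_blank_coloring V E' k f"
  using assms unfolding cf_blank_coloring_def by metis

lemma cf_blank_coloring_card_le_1: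
  assumes "card V \<le> 1" and "finite V" and "\<And>v. v \<in> V \<Longrightarrow> E v v"
  shows "cf_blank_coloring V E 2 (\<lambda>_. 1)"
proof -
  have "\<forall>u\<in>V. \<forall>w\<in>V. u = w"
    using assms(1,2) card_le_Suc0_iff_eq by auto
  then show ?thesis
    using assms(3) unfolding cf_blank_coloring_def by auto
qed

lemma cf_blank_coloring_disjoint_Un:
  assumes "cf_blank_coloring A E k fA" and "cf_blank_coloring B E k fB" and "A \<inter> B = {}"
    and "\<And>a b. a \<in> A \<Longrightarrow> b \<in> B \<Longrightarrow> \<not> E a b \<and> \<not> E b a"
  shows "cf_blank_coloring (A \<union> B) E k (\<lambda>v. if v \<in> A then fA v else fB v)"
  unfolding cf_blank_coloring_def
proof (intro conjI ballI)
  show "(\<lambda>v. if v \<in> A then fA v else fB v) ` (A \<union> B) \<subseteq> {..<k}"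
    using assms(1,2) unfolding cf_blank_coloring_def by auto
next
  fix v assume "v \<in> A \<union> B"
  then consider "v \<in> A" | "v \<in> B" by blast
  then show "\<exists>u\<in>A \<union> B. E u v \<and> (if u \<in> A then fA u else fB u) \<noteq> 0 \<and>
          (\<forall>w\<in>A \<union> B. E w v \<longrightarrow> w \<noteq> u \<longrightarrow>
             (if w \<in> A then fA w else fB w) \<noteq> (if u \<in> A then fA u else fB u))"
  proof cases
    case 1
    then obtain u where "u \<in> A" "E u v" "fA u \<noteq> 0" "\<forall>w\<in>A. E w v \<longrightarrow> w \<noteq> u \<longrightarrow> fA w \<noteq> fA u"
      using assms(1) unfolding cf_blank_coloring_def by blast
    with 1 show ?thesis
      using assms(4) by (intro bexI[of _ u]) auto
  next
    case 2
    then obtain u where "u \<in> B" "E u v" "fB u \<noteq> 0" "\<forall>w\<in>B. E w v \<longrightarrow> w \<noteq> u \<longrightarrow> fB w \<noteq> fB u"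
      using assms(2) unfolding cf_blank_coloring_def by blast
    with 2 show ?thesis
      using assms(3,4) by (intro bexI[of _ u]) auto
  qed
qed

text \<open>The new colours \<open>k + h v\<close> lie above the old palette, so they never collide with the
  unique colour of an old neighbourhood, and within \<open>M\<close> they separate as \<open>h\<close> does.\<close>
lemma cf_blank_coloring_extend:
  assumes f: "cf_blank_coloring (V - M) E k f" and h: "cf_blank_coloring M E m h" and "M \<subseteq> V"
  shows "cf_blank_coloring V E (k + m) (\<lambda>v. if v \<in> M then k + h v else f v)"
  unfolding cf_blank_coloring_def
proof (intro conjI ballI)
  show "(\<lambda>v. if v \<in> M then k + h v else f v) ` V \<subseteq> {..<k + m}"
    using f h unfolding cf_blank_coloring_def by force
next
  fix v assume "v \<in> V"
  show "\<exists>u\<in>V. E u v \<and> (if u \<in> M then k + h u else f u) \<noteq> 0 \<and>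
          (\<forall>w\<in>V. E w v \<longrightarrow> w \<noteq> u \<longrightarrow>
             (if w \<in> M then k + h w else f w) \<noteq> (if u \<in> M then k + h u else f u))"
  proof (cases "v \<in> M")
    case True
    then obtain u where "u \<in> M" "E u v" "h u \<noteq> 0" "\<forall>w\<in>M. E w v \<longrightarrow> w \<noteq> u \<longrightarrow> h w \<noteq> h u"
      using h unfolding cf_blank_coloring_def by blast
    moreover have "f w < k" if "w \<in> V - M" for w
      using f that unfolding cf_blank_coloring_def by blast
    ultimately show ?thesis
      using \<open>M \<subseteq> V\<close> by (intro bexI[of _ u]) (auto, fastforce)
  next
    case False
    then obtain u where "u \<in> V - M" "E u v" "f u \<noteq> 0" "f u < k"
        "\<forall>w\<in>V - M. E w v \<longrightarrow> w \<noteq> u \<longrightarrow> f w \<noteq> f u"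
      using f \<open>v \<in> V\<close> unfolding cf_blank_coloring_def by blast
    then show ?thesis
      by (intro bexI[of _ u]) auto
  qed
qed

definition intervals_meet :: "('a \<Rightarrow> real) \<Rightarrow> ('a \<Rightarrow> real) \<Rightarrow> 'a \<Rightarrow> 'a \<Rightarrow> bool" where
  "intervals_meet lo hi u v \<longleftrightarrow> lo u \<le> hi v \<and> lo v \<le> hi u"

text \<open>Invariant of the greedy colouring of the intervals \<open>[lo v, hi v]\<close>, built from right to left:
  the intervals starting right of \<open>a\<close> are already served, and the intervals starting at or
  left of \<open>a\<close> see the coloured intervals only through a representative \<open>x0\<close>, whose colour is
  the only one that the next interval coloured on the left has to avoid.\<close>
definition cf_coloring_right_of ::
    "('a \<Rightarrow> real) \<Rightarrow> ('a \<Rightarrow> real) \<Rightarrow> 'a set \<Rightarrow> real \<Rightarrow> ('a \<Rightarrow> nat) \<Rightarrow> bool" where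
  "cf_coloring_right_of lo hi M a g \<longleftrightarrow>
     g ` M \<subseteq> {..<3} \<and> (\<forall>x\<in>M. g x \<noteq> 0 \<longrightarrow> a < hi x) \<and>
     (\<forall>v\<in>M. a < lo v \<longrightarrow> (\<exists>u\<in>M. intervals_meet lo hi u v \<and> g u \<noteq> 0 \<and>
        (\<forall>w\<in>M. intervals_meet lo hi w v \<longrightarrow> w \<noteq> u \<longrightarrow> g w \<noteq> g u))) \<and>
     (\<exists>x0. (\<forall>x\<in>M. g x \<noteq> 0 \<longrightarrow> x \<noteq> x0 \<longrightarrow> a < lo x) \<and>
        (\<forall>v\<in>M. lo v \<le> a \<longrightarrow> (\<forall>x\<in>M. g x \<noteq> 0 \<longrightarrow> intervals_meet lo hi x v \<longrightarrow>
           x0 \<in> M \<and> intervals_meet lo hi x0 v \<and> g x0 \<noteq> 0 \<and> (x \<noteq> x0 \<longrightarrow> g x \<noteq> g x0))))"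

lemma cf_coloring_right_of_step:
  assumes g: "cf_coloring_right_of lo hi M (hi s) g"
    and s: "s \<in> M" "lo s \<le> t" "t \<le> hi s" and "a < t"
    and t_min: "\<And>v. v \<in> M \<Longrightarrow> a < lo v \<Longrightarrow> t \<le> hi v"
    and s_max: "\<And>w. w \<in> M \<Longrightarrow> lo w \<le> t \<Longrightarrow> t \<le> hi w \<Longrightarrow> hi w \<le> hi s"
  shows "\<exists>g'. cf_coloring_right_of lo hi M a g'"
proof -
  let ?meets = "intervals_meet lo hi"
  obtain x0 where g_range: "g ` M \<subseteq> {..<3}" and g_hi: "\<forall>x\<in>M. g x \<noteq> 0 \<longrightarrow> hi s < hi x"
    and g_cf: "\<forall>v\<in>M. hi s < lo v \<longrightarrow> (\<exists>u\<in>M. ?meets u v \<and> g u \<noteq> 0 \<and>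
        (\<forall>w\<in>M. ?meets w v \<longrightarrow> w \<noteq> u \<longrightarrow> g w \<noteq> g u))"
    and x0_lo: "\<forall>x\<in>M. g x \<noteq> 0 \<longrightarrow> x \<noteq> x0 \<longrightarrow> hi s < lo x"
    and x0_rep: "\<forall>v\<in>M. lo v \<le> hi s \<longrightarrow> (\<forall>x\<in>M. g x \<noteq> 0 \<longrightarrow> ?meets x v \<longrightarrow>
        x0 \<in> M \<and> ?meets x0 v \<and> g x0 \<noteq> 0 \<and> (x \<noteq> x0 \<longrightarrow> g x \<noteq> g x0))"
    using g unfolding cf_coloring_right_of_def by (elim conjE exE) (rule that)
  define c :: nat where "c = (if g x0 = 1 then 2 else 1)"
  define g' where "g' = g(s := c)"
  have c: "c \<noteq> 0" "c < 3" "c \<noteq> g x0"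
    by (auto simp: c_def)
  have gs: "g s = 0"
    using g_hi s by force
  text \<open>A coloured interval does not contain \<open>t\<close>, since it reaches further right than \<open>s\<close>.\<close>
  have t_lo: "t < lo x" if "x \<in> M" "g x \<noteq> 0" for x
    using s_max[of x] g_hi s that by force
  have s_meets: "?meets s v" if "lo v \<le> hi s" "t \<le> hi v" for v
    using that s by (simp add: intervals_meet_def)
  have cf: "\<exists>u\<in>M. ?meets u v \<and> g' u \<noteq> 0 \<and> (\<forall>w\<in>M. ?meets w v \<longrightarrow> w \<noteq> u \<longrightarrow> g' w \<noteq> g' u)"
    if v: "v \<in> M" "a < lo v" for v
  proof (cases "hi s < lo v")
    case True
    then obtain u where "u \<in> M" "?meets u v" "g u \<noteq> 0" "\<forall>w\<in>M. ?meets w v \<longrightarrow> w \<noteq> u \<longrightarrow> g w \<noteq> g u"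
      using g_cf v by blast
    moreover have "\<not> ?meets s v"
      using True by (simp add: intervals_meet_def)
    ultimately show ?thesis
      using gs by (intro bexI[of _ u]) (auto simp: g'_def)
  next
    case False
    then have meets_s: "?meets s v"
      using s_meets t_min v by simp
    show ?thesis
    proof (cases "\<exists>x\<in>M. g x \<noteq> 0 \<and> ?meets x v")
      case True
      then obtain x where x: "x \<in> M" "g x \<noteq> 0" "?meets x v"
        by blast
      have rep_v: "\<forall>x\<in>M. g x \<noteq> 0 \<longrightarrow> ?meets x v \<longrightarrow>
          x0 \<in> M \<and> ?meets x0 v \<and> g x0 \<noteq> 0 \<and> (x \<noteq> x0 \<longrightarrow> g x \<noteq> g x0)"
        using x0_rep v False by simp
      then have x0: "x0 \<in> M" "?meets x0 v" "g x0 \<noteq> 0"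
        using x by blast+
      with c gs rep_v show ?thesis
        by (intro bexI[of _ x0]) (auto simp: g'_def)
    next
      case False
      with meets_s s c show ?thesis
        by (intro bexI[of _ s]) (auto simp: g'_def)
    qed
  qed
  have rep: "?meets s v \<and> g' s \<noteq> 0 \<and> (x \<noteq> s \<longrightarrow> g' x \<noteq> g' s)"
    if "v \<in> M" "lo v \<le> a" "x \<in> M" "g' x \<noteq> 0" "?meets x v" for v x
  proof (cases "x = s")
    case True
    then show ?thesis
      using that c by (simp add: g'_def)
  next
    case False
    then have "g x \<noteq> 0"
      using that by (simp add: g'_def)
    then have "t \<le> hi v"
      using t_lo that by (fastforce simp: intervals_meet_def)
    then have "hi v \<le> hi s" and "?meets s v"
      using s_max s_meets that s \<open>a < t\<close> by auto
    moreover have "x = x0"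
      using x0_lo \<open>g x \<noteq> 0\<close> that \<open>hi v \<le> hi s\<close> by (force simp: intervals_meet_def)
    ultimately show ?thesis
      using c False s by (simp add: g'_def)
  qed
  have range: "g' ` M \<subseteq> {..<3}"
    using g_range c by (auto simp: g'_def)
  have hi: "a < hi x" if "x \<in> M" "g' x \<noteq> 0" for x
    using that g_hi s \<open>a < t\<close> by (cases "x = s") (auto simp: g'_def)
  have lo: "a < lo x" if "x \<in> M" "g' x \<noteq> 0" "x \<noteq> s" for x
    using that t_lo \<open>a < t\<close> by (fastforce simp: g'_def)
  have "cf_coloring_right_of lo hi M a g'"
    unfolding cf_coloring_right_of_def
    using range hi cf lo rep by (intro conjI exI[of _ s]) (simp_all add: \<open>s \<in> M\<close>)
  then show ?thesis
    by blast
qed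

lemma cf_coloring_right_of_exists:
  fixes lo hi :: "'a \<Rightarrow> real"
  assumes "finite M" and "\<forall>v\<in>M. lo v \<le> hi v"
  shows "\<exists>g. cf_coloring_right_of lo hi M a g"
proof (induction "card {v\<in>M. a < lo v}" arbitrary: a rule: less_induct)
  case less
  define P where "P = {v\<in>M. a < lo v}"
  show ?case
  proof (cases "P = {}")
    case True
    then have "cf_coloring_right_of lo hi M a (\<lambda>_. 0)"
      unfolding cf_coloring_right_of_def P_def by auto
    then show ?thesis
      by blast
  next
    case False
    have "finite P"
      using assms(1) by (simp add: P_def)
    then have "Min (hi ` P) \<in> hi ` P"
      using False by (intro Min_in) auto
    then obtain p where p: "p \<in> P" "hi p = Min (hi ` P)"
      by auto
    define t where "t = hi p"
    define C where "C = {w\<in>M. lo w \<le> t \<and> t \<le> hi w}"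
    have "p \<in> C" "finite C"
      using p assms by (auto simp: P_def C_def t_def)
    then have "Max (hi ` C) \<in> hi ` C"
      by (intro Max_in) auto
    then obtain s where s: "s \<in> C" "hi s = Max (hi ` C)"
      by auto
    have "a < t"
      using p assms(2) by (force simp: P_def t_def)
    have "{v\<in>M. hi s < lo v} \<subset> P"
      using s \<open>p \<in> C\<close> \<open>finite C\<close> \<open>a < t\<close> p assms(2) by (force simp: P_def C_def t_def)
    then have "card {v\<in>M. hi s < lo v} < card {v\<in>M. a < lo v}"
      using \<open>finite P\<close> psubset_card_mono unfolding P_def by blast
    then obtain g where "cf_coloring_right_of lo hi M (hi s) g"
      using less by blast
    then show ?thesis
    proof (rule cf_coloring_right_of_step)
      show "s \<in> M" "lo s \<le> t" "t \<le> hi s"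
        using s by (auto simp: C_def)
      show "t \<le> hi v" if "v \<in> M" "a < lo v" for v
        using \<open>finite P\<close> that p by (simp add: P_def t_def)
      show "hi w \<le> hi s" if "w \<in> M" "lo w \<le> t" "t \<le> hi w" for w
        using \<open>finite C\<close> that s by (simp add: C_def)
    qed (rule \<open>a < t\<close>)
  qed
qed

lemma intervals_cf_blank_coloring:
  fixes lo hi :: "'a \<Rightarrow> real"
  assumes "finite M" and "\<forall>v\<in>M. lo v \<le> hi v"
  shows "\<exists>h. cf_blank_coloring M (intervals_meet lo hi) 3 h"
proof -
  define a where "a = Min (insert 0 (lo ` M)) - 1"
  have "a < lo v" if "v \<in> M" for v
  proof -
    have "Min (insert 0 (lo ` M)) \<le> lo v"
      using assms(1) that by (intro Min_le) auto
    then show ?thesis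
      by (simp add: a_def)
  qed
  moreover obtain g where "cf_coloring_right_of lo hi M a g"
    using cf_coloring_right_of_exists[OF assms] by blast
  ultimately have "cf_blank_coloring M (intervals_meet lo hi) 3 g"
    unfolding cf_coloring_right_of_def cf_blank_coloring_def by blast
  then show ?thesis
    by blast
qed

lemma exists_balanced_cut:
  fixes l h :: "'a \<Rightarrow> real"
  assumes "finite F" and "\<forall>R\<in>F. l R \<le> h R"
  shows "\<exists>x0. 2 * card {R\<in>F. h R < x0} \<le> card F \<and> 2 * card {R\<in>F. x0 < l R} \<le> card F"
proof (cases "F = {}")
  case True
  then show ?thesis
    by simp
next
  case False
  define X where "X = {x \<in> h ` F. card F \<le> 2 * card {R\<in>F. h R \<le> x}}"
  have "{R\<in>F. h R \<le> Max (h ` F)} = F"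
    using assms(1) by auto
  then have "Max (h ` F) \<in> X"
    using assms(1) False by (auto simp: X_def)
  moreover have "finite X"
    using assms(1) by (simp add: X_def)
  ultimately have x0: "Min X \<in> X" and x0_min: "\<forall>y\<in>X. Min X \<le> y"
    by (auto intro: Min_in)
  have "{R\<in>F. Min X < l R} \<subseteq> F - {R\<in>F. h R \<le> Min X}"
    using assms(2) by force
  then have "card {R\<in>F. Min X < l R} \<le> card F - card {R\<in>F. h R \<le> Min X}"
    using assms(1) by (metis (no_types, lifting) card_Diff_subset card_mono finite_Diff
        finite_subset mem_Collect_eq subsetI)
  moreover have "card F \<le> 2 * card {R\<in>F. h R \<le> Min X}"
    using x0 by (simp add: X_def)
  ultimately have right: "2 * card {R\<in>F. Min X < l R} \<le> card F"
    by linarith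
  have left: "2 * card {R\<in>F. h R < Min X} \<le> card F"
  proof (cases "{R\<in>F. h R < Min X} = {}")
    case False
    define y where "y = Max (h ` {R\<in>F. h R < Min X})"
    have y: "y \<in> h ` {R\<in>F. h R < Min X}"
      using assms(1) False unfolding y_def by (intro Max_in) auto
    then have "y \<notin> X"
      using x0_min by force
    then have "2 * card {R\<in>F. h R \<le> y} < card F"
      using y by (auto simp: X_def)
    moreover have "{R\<in>F. h R < Min X} \<subseteq> {R\<in>F. h R \<le> y}"
      using assms(1) by (auto simp: y_def)
    then have "card {R\<in>F. h R < Min X} \<le> card {R\<in>F. h R \<le> y}"
      using assms(1) by (intro card_mono) auto
    ultimately show ?thesis
      by linarith
  qed (metis card.empty le0 mult_0_right)
  show ?thesis
    using left right by blast
qed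

definition xlo :: "(real \<times> real) set \<Rightarrow> real" where "xlo R = Inf (fst ` R)"
definition xhi :: "(real \<times> real) set \<Rightarrow> real" where "xhi R = Sup (fst ` R)"
definition ylo :: "(real \<times> real) set \<Rightarrow> real" where "ylo R = Inf (snd ` R)"
definition yhi :: "(real \<times> real) set \<Rightarrow> real" where "yhi R = Sup (snd ` R)"

lemma is_rectangle_coords:
  assumes "is_rectangle R"
  shows "xlo R \<le> xhi R" "ylo R \<le> yhi R" "R = {xlo R..xhi R} \<times> {ylo R..yhi R}"
proof -
  obtain a b c d where "a \<le> b" "c \<le> d" "R = {a..b} \<times> {c..d}"
    using assms unfolding is_rectangle_def by blast
  then show "xlo R \<le> xhi R" "ylo R \<le> yhi R" "R = {xlo R..xhi R} \<times> {ylo R..yhi R}"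
    by (simp_all add: xlo_def xhi_def ylo_def yhi_def)
qed

lemma is_rectangle_nonempty: "is_rectangle R \<Longrightarrow> R \<noteq> {}"
  using is_rectangle_coords[of R] by fastforce

lemma rectangles_meet_iff:
  assumes "is_rectangle R" and "is_rectangle R'"
  shows "R \<inter> R' \<noteq> {} \<longleftrightarrow> intervals_meet xlo xhi R R' \<and> intervals_meet ylo yhi R R'"
proof -
  have "R \<inter> R' = ({xlo R..xhi R} \<inter> {xlo R'..xhi R'}) \<times> ({ylo R..yhi R} \<inter> {ylo R'..yhi R'})"
    using is_rectangle_coords(3)[OF assms(1)] is_rectangle_coords(3)[OF assms(2)]
    by (metis Times_Int_Times)
  then show ?thesis
    using is_rectangle_coords(1,2)[OF assms(1)] is_rectangle_coords(1,2)[OF assms(2)]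
    by (auto simp: intervals_meet_def)
qed

lemma rectangles_cf_blank_coloring:
  assumes "finite F" and "\<forall>R\<in>F. is_rectangle R" and "card F \<le> 2 ^ k"
  shows "\<exists>f. cf_blank_coloring F (\<lambda>u v. u \<inter> v \<noteq> {}) (3 * k + 2) f"
  using assms
proof (induction k arbitrary: F)
  case 0
  then have "cf_blank_coloring F (\<lambda>u v. u \<inter> v \<noteq> {}) 2 (\<lambda>_. 1)"
    by (intro cf_blank_coloring_card_le_1) (auto dest: is_rectangle_nonempty)
  then show ?case
    by (metis add_0 mult_0_right)
next
  case (Suc k)
  let ?meet = "\<lambda>u v. u \<inter> v \<noteq> {}"
  obtain x0 where cut: "2 * card {R\<in>F. xhi R < x0} \<le> card F" "2 * card {R\<in>F. x0 < xlo R} \<le> card F"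
    using exists_balanced_cut[of F xlo xhi] Suc.prems is_rectangle_coords by blast
  define A where "A = {R\<in>F. xhi R < x0}"
  define B where "B = {R\<in>F. x0 < xlo R}"
  define M where "M = F - (A \<union> B)"
  obtain fA where fA: "cf_blank_coloring A ?meet (3 * k + 2) fA"
    using Suc.IH[of A] Suc.prems cut(1) by (auto simp: A_def)
  obtain fB where fB: "cf_blank_coloring B ?meet (3 * k + 2) fB"
    using Suc.IH[of B] Suc.prems cut(2) by (auto simp: B_def)
  have rect_meet: "?meet u v \<longleftrightarrow> intervals_meet xlo xhi u v \<and> intervals_meet ylo yhi u v"
    if "u \<in> F" "v \<in> F" for u v
    using rectangles_meet_iff Suc.prems(2) that by blast
  have "A \<inter> B = {}"
    using Suc.prems(2) is_rectangle_coords by (fastforce simp: A_def B_def)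
  moreover have "\<not> ?meet a b \<and> \<not> ?meet b a" if "a \<in> A" "b \<in> B" for a b
    using that rect_meet by (auto simp: A_def B_def intervals_meet_def)
  moreover have "F - M = A \<union> B"
    by (auto simp: M_def A_def B_def)
  ultimately have fAB: "cf_blank_coloring (F - M) ?meet (3 * k + 2) (\<lambda>v. if v \<in> A then fA v else fB v)"
    using cf_blank_coloring_disjoint_Un[OF fA fB] by simp
  obtain h where "cf_blank_coloring M (intervals_meet ylo yhi) 3 h"
    using intervals_cf_blank_coloring[of M ylo yhi] Suc.prems is_rectangle_coords by (auto simp: M_def)
  then have fM: "cf_blank_coloring M ?meet 3 h"
    by (rule cf_blank_coloring_cong)
      (use rect_meet in \<open>auto simp: M_def A_def B_def intervals_meet_def\<close>)
  have "cf_blank_coloring F ?meet (3 * k + 2 + 3) (\<lambda>v. if v \<in> M then 3 * k + 2 + h v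
      else if v \<in> A then fA v else fB v)"
    using cf_blank_coloring_extend[OF fAB fM] by (simp add: M_def)
  then show ?case
    by (auto simp: algebra_simps)
qed

lemma chi_cf_cn_le_if_cf_blank_coloring:
  assumes "cf_blank_coloring V (\<lambda>u v. u \<inter> v \<noteq> {}) k f" and "{} \<notin> V"
  shows "chi_cf_cn V inter_adj \<le> k"
proof -
  have nbhd: "closed_nbhd V inter_adj v = {u\<in>V. u \<inter> v \<noteq> {}}" if "v \<in> V" for v
    using that assms(2) by (auto simp: closed_nbhd_def inter_adj_def)
  have "cf_cn_coloring V inter_adj k f"
    unfolding cf_cn_coloring_def
  proof (intro conjI ballI)
    show "f ` V \<subseteq> {..<k}"
      using assms(1) by (simp add: cf_blank_coloring_def)
    fix v assume "v \<in> V"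
    then obtain u where "u \<in> V" "u \<inter> v \<noteq> {}" "\<forall>w\<in>V. w \<inter> v \<noteq> {} \<longrightarrow> w \<noteq> u \<longrightarrow> f w \<noteq> f u"
      using assms(1) unfolding cf_blank_coloring_def by blast
    then show "\<exists>u\<in>closed_nbhd V inter_adj v. \<forall>w\<in>closed_nbhd V inter_adj v. w \<noteq> u \<longrightarrow> f w \<noteq> f u"
      using nbhd[OF \<open>v \<in> V\<close>] by (intro bexI[of _ u]) auto
  qed
  then show ?thesis
    unfolding chi_cf_cn_def by (blast intro: Least_le)
qed

theorem theorem1p6:
  shows "\<exists>C::real. \<forall>(n::nat) (F::(real \<times> real) set set).
           n \<ge> 2 \<longrightarrow> finite F \<longrightarrow> card F = n \<longrightarrow> (\<forall>R\<in>F. is_rectangle R) \<longrightarrow>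
           real (chi_cf_cn F inter_adj) \<le> C * ln (real n)"
proof (intro exI[of _ "8 / ln 2"] allI impI)
  fix n :: nat and F :: "(real \<times> real) set set"
  assume n: "n \<ge> 2" and F: "finite F" "card F = n" "\<forall>R\<in>F. is_rectangle R"
  have "card F \<le> 2 ^ Suc (floor_log n)"
    using floor_log_exp2_gt[of n] F(2) by simp
  then obtain f where "cf_blank_coloring F (\<lambda>u v. u \<inter> v \<noteq> {}) (3 * Suc (floor_log n) + 2) f"
    using rectangles_cf_blank_coloring F by blast
  then have "chi_cf_cn F inter_adj \<le> 3 * floor_log n + 5"
    using chi_cf_cn_le_if_cf_blank_coloring F(3) is_rectangle_nonempty by fastforce
  moreover have "real (floor_log n) \<le> log 2 n"
    using n by (simp add: floor_log_altdef)
  moreover have "1 \<le> log 2 n"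
    using n by simp
  ultimately have "real (chi_cf_cn F inter_adj) \<le> 8 * log 2 n"
    by linarith
  then show "real (chi_cf_cn F inter_adj) \<le> 8 / ln 2 * ln (real n)"
    by (simp add: log_def)
qed

end
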